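(* Suppose the following holds: for every polynomial $f(t)=1+\sum_{i=1}^{d}f_{i-1}t^i$ with positive integer coefficients and only real roots, with recursive decomposition $f(t)=g(t)+t\,h(t)$, $g(t)=1+\sum_{i=1}^{d}g_it^i$, $h(t)=1+\sum_{i=1}^{d-1}h_it^i$, one has $h_i\le g_i$ for all $1\le i\le d-1$. Then every polynomial $1+\sum_{i=1}^{d}f_{i-1}t^i$ with positive integer coefficients and only real roots is the $f$-polynomial of a simplicial complex.
   Context: For positive integers $m,i$, the $i$-th binomial expansion of $m$ is the unique representation $m=\binom{a_i}{i}+\binom{a_{i-1}}{i-1}+\cdots+\binom{a_j}{j}$ with $a_i>\cdots>a_j\ge j\ge1$. Recursive decomposition: for $f(t)=1+\sum_{i=1}^d f_{i-1}t^i$ with positive integer coefficients and, for each $1\le i\le d$, the $i$-th binomial expansion $f_{i-1}=\binom{a_i}{i}+\cdots+\binom{a_j}{j}$, set $g_i=\binom{a_i-1}{i}+\binom{a_{i-1}-1}{i-1}+\cdots+\binom{a_j-1}{j}$ and $h_{i-1}=\binom{a_i-1}{i-1}+\binom{a_{i-1}-1}{i-2}+\cdots+\binom{a_j-1}{j-1}$ (so $h_0=1$ and $f_{i-1}=g_i+h_{i-1}$); then $f(t)=g(t)+t\,h(t)$ with $g(t)=1+\sum_{i=1}^d g_it^i$, $h(t)=1+\sum_{i=1}^{d-1}h_it^i$. The $f$-polynomial of a $(d-1)$-dimensional simplicial complex $\Delta$ is $\sum_{i=0}^{d}f_{i-1}t^i$, where $f_i$ is the number of faces of cardinality $i+1$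 and $f_{-1}=1$. *)

theory Defs
  imports Complex_Main "HOL-Computational_Algebra.Polynomial"
begin

text \<open>The i-th binomial expansion of m is encoded by the list L = [a_i, a_(i-1), ..., a_j]
  (so L!k = a_(i-k)), of length i - j + 1 with 1 \<le> j \<le> i.\<close>
definition binexp_rep :: "nat \<Rightarrow> nat \<Rightarrow> nat list \<Rightarrow> bool" where
  "binexp_rep i m L \<longleftrightarrow>
     1 \<le> length L \<and> length L \<le> i \<and>
     (\<forall>k. Suc k < length L \<longrightarrow> L ! k > L ! Suc k) \<and>
     (\<forall>k < length L. L ! k \<ge> i - k) \<and>
     m = (\<Sum>k<length L. (L ! k) choose (i - k))"

definition binexp :: "nat \<Rightarrow> nat \<Rightarrow> nat list" where
  "binexp i m = (THE L. binexp_rep i m L)"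

text \<open>g_i computed from the i-th binomial expansion of f_(i-1) = m.\<close>
definition g_coef :: "nat \<Rightarrow> nat \<Rightarrow> nat" where
  "g_coef i m = (let L = binexp i m in \<Sum>k<length L. (L ! k - 1) choose (i - k))"

text \<open>h_(i-1) computed from the i-th binomial expansion of f_(i-1) = m.\<close>
definition h_coef :: "nat \<Rightarrow> nat \<Rightarrow> nat" where
  "h_coef i m = (let L = binexp i m in \<Sum>k<length L. (L ! k - 1) choose (i - k - 1))"

definition pos_real_rooted :: "nat poly \<Rightarrow> bool" where
  "pos_real_rooted f \<longleftrightarrow> coeff f 0 = 1 \<and> (\<forall>i\<in>{1..degree f}. coeff f i > 0) \<and>
     (\<forall>z::complex. poly (map_poly of_nat f) z = 0 \<longrightarrow> z \<in> \<real>)"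

definition simplicial_complex :: "'v set set \<Rightarrow> bool" where
  "simplicial_complex \<Delta> \<longleftrightarrow> finite \<Delta> \<and> {} \<in> \<Delta> \<and> (\<forall>F\<in>\<Delta>. finite F) \<and>
     (\<forall>F\<in>\<Delta>. \<forall>G. G \<subseteq> F \<longrightarrow> G \<in> \<Delta>)"

definition is_f_polynomial :: "nat poly \<Rightarrow> 'v set set \<Rightarrow> bool" where
  "is_f_polynomial f \<Delta> \<longleftrightarrow> (\<forall>i. card {F\<in>\<Delta>. card F = i} = coeff f i)"

end

theory Submission
  imports Defs "HOL-Library.Nat_Bijection"
begin

text \<open>The complex is built as in the Kruskal--Katona theorem: its i-element faces are the first
  f_(i-1) i-subsets of \<nat> in colex order, the family read off from the i-th binomial expansion of
  f_(i-1). Colex segments of sets of equal size are ordered by inclusion according to their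
  cardinalities. The shadow of level i+1 is the segment given by the same expansion with every
  lower index decreased by one. Decreasing instead every a_k by one, Pascal's rule splits a segment
  into a segment of sets of the same size and, below it, a segment containing its shadow; for the
  shadow of level i+1 the upper part has h_i elements, for level i it has g_i elements. So
  h_i \<le> g_i fits the upper parts, hence their shadows, hence the shadow of level i+1 into level i.\<close>

subsection \<open>Complexes assembled from layers\<close>

lemma subset_mem_layer:
  fixes Lay :: "nat \<Rightarrow> 'v set set"
  assumes Lay_0: "Lay 0 = {{}}"
    and card_Lay: "\<And>k X. k \<le> d \<Longrightarrow> X \<in> Lay k \<Longrightarrow> finite X \<and> card X = k"
    and remove: "\<And>k X x. Suc k \<le> d \<Longrightarrow> X \<in> Lay (Suc k) \<Longrightarrow> x \<in> X \<Longrightarrow> X - {x} \<in> Lay k"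
  shows "k \<le> d \<Longrightarrow> X \<in> Lay k \<Longrightarrow> G \<subseteq> X \<Longrightarrow> G \<in> Lay (card G)"
proof (induction k arbitrary: X)
  case 0
  then show ?case using Lay_0 by auto
next
  case (Suc k)
  show ?case
  proof (cases "G = X")
    case True
    then show ?thesis using Suc.prems card_Lay[of "Suc k" X] by simp
  next
    case False
    then obtain x where "x \<in> X" "G \<subseteq> X - {x}" using Suc.prems by auto
    moreover have "X - {x} \<in> Lay k" using remove Suc.prems \<open>x \<in> X\<close> by blast
    ultimately show ?thesis using Suc.IH Suc.prems(1) by simp
  qed
qed

lemma simplicial_complex_of_layers:
  fixes Lay :: "nat \<Rightarrow> 'v set set"
  assumes Lay_0: "Lay 0 = {{}}"
    and finite_Lay: "\<And>k. k \<le> d \<Longrightarrow> finite (Lay k)"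
    and card_Lay: "\<And>k X. k \<le> d \<Longrightarrow> X \<in> Lay k \<Longrightarrow> finite X \<and> card X = k"
    and remove: "\<And>k X x. Suc k \<le> d \<Longrightarrow> X \<in> Lay (Suc k) \<Longrightarrow> x \<in> X \<Longrightarrow> X - {x} \<in> Lay k"
  shows "simplicial_complex (\<Union>k\<le>d. Lay k)"
    and "card {F \<in> (\<Union>k\<le>d. Lay k). card F = n} = (if n \<le> d then card (Lay n) else 0)"
proof -
  show "simplicial_complex (\<Union>k\<le>d. Lay k)"
    unfolding simplicial_complex_def
  proof (intro conjI ballI allI impI)
    show "finite (\<Union>k\<le>d. Lay k)" using finite_Lay by simp
    show "{} \<in> (\<Union>k\<le>d. Lay k)" using Lay_0 by auto
  next
    fix F assume "F \<in> (\<Union>k\<le>d. Lay k)"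
    then show "finite F" using card_Lay by blast
  next
    fix F G assume "F \<in> (\<Union>k\<le>d. Lay k)" "G \<subseteq> F"
    then obtain k where k: "k \<le> d" "F \<in> Lay k" by auto
    then have "card G \<le> d" using \<open>G \<subseteq> F\<close> card_Lay[of k F] card_mono[of F G] by simp
    moreover have "G \<in> Lay (card G)"
      using subset_mem_layer[OF Lay_0 card_Lay remove k] \<open>G \<subseteq> F\<close> by blast
    ultimately show "G \<in> (\<Union>k\<le>d. Lay k)" by blast
  qed
  have "{F \<in> (\<Union>k\<le>d. Lay k). card F = n} = (if n \<le> d then Lay n else {})"
  proof (intro set_eqI iffI)
    fix F assume "F \<in> {F \<in> (\<Union>k\<le>d. Lay k). card F = n}"
    then obtain k where "k \<le> d" "F \<in> Lay k" "card F = n" by auto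
    moreover from this have "k = n" using card_Lay by blast
    ultimately show "F \<in> (if n \<le> d then Lay n else {})" by simp
  next
    fix F assume "F \<in> (if n \<le> d then Lay n else {})"
    then show "F \<in> {F \<in> (\<Union>k\<le>d. Lay k). card F = n}" using card_Lay by (auto split: if_splits)
  qed
  then show "card {F \<in> (\<Union>k\<le>d. Lay k). card F = n} = (if n \<le> d then card (Lay n) else 0)"
    by simp
qed

text \<open>Since set_encode X is the sum of 2^x over x \<in> X, comparing codes is the colex order.\<close>
definition colex_initial :: "nat \<Rightarrow> nat set set \<Rightarrow> bool" where
  "colex_initial k A \<longleftrightarrow>
     (\<forall>Y\<in>A. \<forall>X. finite X \<and> card X = k \<and> set_encode X < set_encode Y \<longrightarrow> X \<in> A)"

lemma colex_initial_subset_if_card_le: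
  assumes "finite A"
    and A: "\<forall>X\<in>A. finite X \<and> card X = k" and B: "\<forall>X\<in>B. finite X \<and> card X = k"
    and "colex_initial k A" "colex_initial k B" "card A \<le> card B"
  shows "A \<subseteq> B"
proof (rule ccontr)
  assume "\<not> A \<subseteq> B"
  then obtain X where X: "X \<in> A" "X \<notin> B" by auto
  have "B \<subseteq> A"
  proof
    fix Y assume Y: "Y \<in> B"
    have "set_encode Y \<noteq> set_encode X" using set_encode_eq A B X Y by metis
    moreover have "\<not> set_encode X < set_encode Y"
      using \<open>colex_initial k B\<close> A X Y unfolding colex_initial_def by blast
    ultimately show "Y \<in> A"
      using \<open>colex_initial k A\<close> B X Y unfolding colex_initial_def by auto
  qed
  with X have "B \<subset> A" by auto
  with \<open>finite A\<close> have "card B < card A" by (rule psubset_card_mono)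
  with \<open>card A \<le> card B\<close> show False by simp
qed

lemma subset_lessThan_if_set_encode_less:
  assumes "finite X" "set_encode X < 2 ^ b"
  shows "X \<subseteq> {..<b}"
proof
  fix x assume "x \<in> X"
  with assms(1) have "2 ^ x \<le> set_encode X" unfolding set_encode_def by (intro member_le_sum) auto
  with assms(2) have "2 ^ x < (2::nat) ^ b" by linarith
  then show "x \<in> {..<b}" by simp
qed

lemma set_encode_less_power:
  assumes "X \<subseteq> {..<a}"
  shows "set_encode X < 2 ^ a"
proof -
  have "set_encode X \<le> (\<Sum>x<a. 2 ^ x)"
    unfolding set_encode_def using assms by (intro sum_mono2) auto
  also have "\<dots> = 2 ^ a - 1"
    by (metis mask_eq_sum_exp lessThan_def)
  also have "\<dots> < 2 ^ a" by simp
  finally show ?thesis .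
qed

subsection \<open>Colex segments\<close>

text \<open>For a strictly decreasing list L = [a_k, a_(k-1), ..., a_j] this is the colex-initial
  family of the first C(a_k,k) + ... + C(a_j,j) k-subsets of \<nat>.\<close>
fun colex_segment :: "nat \<Rightarrow> nat list \<Rightarrow> nat set set" where
  "colex_segment k [] = {}"
| "colex_segment 0 (a # L) = {{}}"
| "colex_segment (Suc k) (a # L) =
     {Y. Y \<subseteq> {..<a} \<and> card Y = Suc k} \<union> insert a ` colex_segment k L"

lemma colex_segment_subset_lessThan:
  "\<forall>x\<in>set L. x < a \<Longrightarrow> X \<in> colex_segment k L \<Longrightarrow> X \<subseteq> {..<a}"
proof (induction k L arbitrary: X rule: colex_segment.induct)
  case (3 k b L)
  then show ?case by (auto simp: subset_iff)
qed auto

lemma finite_colex_segment: "finite (colex_segment k L)"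
proof (induction k L rule: colex_segment.induct)
  case (3 k a L)
  have "finite {Y. Y \<subseteq> {..<a} \<and> card Y = Suc k}"
    by (rule finite_subset[of _ "Pow {..<a}"]) auto
  with 3 show ?case by simp
qed auto

lemma card_of_mem_colex_segment:
  "sorted_wrt (>) L \<Longrightarrow> X \<in> colex_segment k L \<Longrightarrow> finite X \<and> card X = k"
proof (induction k L arbitrary: X rule: colex_segment.induct)
  case (3 k a L)
  show ?case
  proof (cases "X \<in> insert a ` colex_segment k L")
    case True
    then obtain Z where Z: "Z \<in> colex_segment k L" "X = insert a Z" by auto
    have "Z \<subseteq> {..<a}" using 3(2) Z(1) by (intro colex_segment_subset_lessThan) auto
    then have "a \<notin> Z" by auto
    moreover have "finite Z" "card Z = k" using 3 Z by auto
    ultimately show ?thesis using Z by simp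
  next
    case False
    with 3 show ?thesis by (auto intro: finite_subset)
  qed
qed auto

lemma inj_on_insert_colex_segment:
  "\<forall>x\<in>set L. x < a \<Longrightarrow> inj_on (insert a) (colex_segment k L)"
  using colex_segment_subset_lessThan unfolding inj_on_def
  by (metis insert_ident lessThan_iff subset_eq less_irrefl)

lemma card_colex_segment_Cons:
  assumes "sorted_wrt (>) (a # L)"
  shows "card (colex_segment (Suc k) (a # L)) = (a choose Suc k) + card (colex_segment k L)"
proof -
  have "card (colex_segment (Suc k) (a # L)) =
      card {Y. Y \<subseteq> {..<a} \<and> card Y = Suc k} + card (insert a ` colex_segment k L)"
    by (simp only: colex_segment.simps, rule card_Un_disjoint)
      (auto intro: finite_colex_segment finite_subset[of _ "Pow {..<a}"])
  also have "\<dots> = (a choose Suc k) + card (colex_segment k L)"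
    using n_subsets[of "{..<a}" "Suc k"] card_image inj_on_insert_colex_segment[of L a k] assms
    by simp
  finally show ?thesis .
qed

lemma card_colex_segment:
  "sorted_wrt (>) L \<Longrightarrow> length L \<le> Suc k \<Longrightarrow>
    card (colex_segment k L) = (\<Sum>t<length L. (L ! t) choose (k - t))"
proof (induction k L rule: colex_segment.induct)
  case (3 k a L)
  then show ?case
    by (simp only: card_colex_segment_Cons[OF 3(2)])
      (simp add: sum.lessThan_Suc_shift del: sum.lessThan_Suc)
qed auto

lemma card_colex_segment_map_Suc:
  "sorted_wrt (>) L \<Longrightarrow>
    card (colex_segment (Suc k) (map Suc L)) = card (colex_segment (Suc k) L) + card (colex_segment k L)"
proof (induction L arbitrary: k)
  case (Cons b L)
  have sorted_Suc: "sorted_wrt (>) (Suc b # map Suc L)" using Cons.prems by (simp add: sorted_wrt_map)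
  have "card (colex_segment k (map Suc L)) + (b choose k) =
      card (colex_segment k L) + card (colex_segment k (b # L))"
  proof (cases k)
    case (Suc k')
    then show ?thesis
      using Cons.IH[of k'] Cons.prems card_colex_segment_Cons[OF Cons.prems, of k'] by simp
  qed (cases L; simp)
  then show ?case
    using card_colex_segment_Cons[OF sorted_Suc] card_colex_segment_Cons[OF Cons.prems] by simp
qed simp

lemma colex_initial_colex_segment:
  "sorted_wrt (>) L \<Longrightarrow> colex_initial k (colex_segment k L)"
  unfolding colex_initial_def
proof (induction k L rule: colex_segment.induct)
  case (3 k a L)
  show ?case
  proof (intro ballI allI impI)
    fix Y X assume Y: "Y \<in> colex_segment (Suc k) (a # L)"
      and "finite X \<and> card X = Suc k \<and> set_encode X < set_encode Y"
    then have X: "finite X" "card X = Suc k" "set_encode X < set_encode Y" by auto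
    show "X \<in> colex_segment (Suc k) (a # L)"
    proof (cases "Y \<in> insert a ` colex_segment k L")
      case False
      then have "set_encode Y < 2 ^ a" using Y set_encode_less_power by auto
      then show ?thesis using X subset_lessThan_if_set_encode_less[of X a] by simp
    next
      case True
      then obtain Z where Z: "Z \<in> colex_segment k L" "Y = insert a Z" by auto
      have Z_below: "Z \<subseteq> {..<a}" using 3(2) Z(1) by (intro colex_segment_subset_lessThan) auto
      then have "finite Z" "a \<notin> Z" by (auto dest: finite_subset[OF _ finite_lessThan])
      then have Z_code: "set_encode Z < 2 ^ a" and Y_code: "set_encode Y = 2 ^ a + set_encode Z"
        using Z(2) set_encode_less_power[OF Z_below] by simp_all
      show ?thesis
      proof (cases "a \<in> X")
        case False
        have "X \<subseteq> {..<Suc a}"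
          using X Y_code Z_code by (intro subset_lessThan_if_set_encode_less) simp_all
        with False have "X \<subseteq> {..<a}" by (auto simp: less_Suc_eq)
        then show ?thesis using X by simp
      next
        case True
        define W where "W = X - {a}"
        have X_W: "X = insert a W" "a \<notin> W" "finite W" "card W = k"
          using True X(1,2) W_def by auto
        then have "set_encode W < set_encode Z" using X(3) Y_code by simp
        then have "W \<in> colex_segment k L" using 3(1) 3(2) Z(1) X_W(3,4) by simp
        then show ?thesis using X_W(1) by simp
      qed
    qed
  qed
qed auto

lemma colex_segment_subset_if_card_le:
  assumes "sorted_wrt (>) L" "sorted_wrt (>) M"
    and "card (colex_segment k L) \<le> card (colex_segment k M)"
  shows "colex_segment k L \<subseteq> colex_segment k M"
  using assms card_of_mem_colex_segment colex_initial_colex_segment finite_colex_segment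
  by (intro colex_initial_subset_if_card_le) auto

subsection \<open>Shadows of colex segments\<close>

lemma Diff_singleton_mem_colex_segment:
  "sorted_wrt (>) L \<Longrightarrow> X \<in> colex_segment (Suc k) L \<Longrightarrow> x \<in> X \<Longrightarrow> X - {x} \<in> colex_segment k L"
proof (induction L arbitrary: k X)
  case (Cons a L)
  show ?case
  proof (cases "X \<in> insert a ` colex_segment k L")
    case False
    then have X: "X \<subseteq> {..<a}" "card X = Suc k" using Cons.prems by auto
    have "finite X" using X(1) by (rule finite_subset) simp
    then have "card (X - {x}) = k" using X(2) Cons.prems(3) by simp
    then show ?thesis using X \<open>finite X\<close> by (cases k) auto
  next
    case True
    then obtain Z where Z: "Z \<in> colex_segment k L" "X = insert a Z" by auto
    have Z_below: "Z \<subseteq> {..<a}"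
      using Cons.prems(1) Z(1) by (intro colex_segment_subset_lessThan) auto
    have Z_card: "finite Z" "card Z = k" using card_of_mem_colex_segment Cons.prems(1) Z(1) by auto
    show ?thesis
    proof (cases "x = a")
      case True
      then have "X - {x} = Z" using Z Z_below by auto
      then show ?thesis using Z_below Z_card by (cases k) auto
    next
      case False
      then have "x \<in> Z" using Z Cons.prems(3) by auto
      then obtain j where j: "k = Suc j" using Z_card by (cases k) auto
      then have "Z - {x} \<in> colex_segment j L"
        using Cons.IH[where k = j and X = Z] Cons.prems(1) \<open>x \<in> Z\<close> Z(1) by simp
      moreover have "X - {x} = insert a (Z - {x})" using Z False by auto
      ultimately show ?thesis using j by simp
    qed
  qed
qed simp

lemma insert_mem_colex_segment:
  "sorted_wrt (>) L \<Longrightarrow> \<forall>t<length L. Suc k - t \<le> L ! t \<Longrightarrow> X \<in> colex_segment k L \<Longrightarrow>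
    \<exists>y. y \<notin> X \<and> insert y X \<in> colex_segment (Suc k) L"
proof (induction L arbitrary: k X)
  case (Cons a L)
  have "Suc k \<le> a" using Cons.prems(2)[rule_format, of 0] by simp
  show ?case
  proof (cases k)
    case 0
    then show ?thesis using Cons.prems(3) \<open>Suc k \<le> a\<close> by (intro exI[of _ 0]) auto
  next
    case (Suc j)
    show ?thesis
    proof (cases "X \<in> insert a ` colex_segment j L")
      case False
      then have X: "X \<subseteq> {..<a}" "card X = k" using Cons.prems(3) Suc by auto
      have "finite X" using X(1) by (rule finite_subset) simp
      have "X \<noteq> {..<a}" using X(2) \<open>Suc k \<le> a\<close> by auto
      then obtain y where "y < a" "y \<notin> X" using X(1) by blast
      then show ?thesis using X \<open>finite X\<close> Suc by (intro exI[of _ y]) auto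
    next
      case True
      then obtain Z where Z: "Z \<in> colex_segment j L" "X = insert a Z" by auto
      have "\<forall>t<length L. Suc j - t \<le> L ! t"
        using Cons.prems(2) Suc by (auto simp: All_less_Suc2)
      then obtain y where y: "y \<notin> Z" "insert y Z \<in> colex_segment (Suc j) L"
        using Cons.IH[where k = j and X = Z] Cons.prems(1) Z(1) by auto
      have "insert y Z \<subseteq> {..<a}"
        using Cons.prems(1) y(2) by (intro colex_segment_subset_lessThan) auto
      then have "y \<notin> X" "insert y X = insert a (insert y Z)" using y Z by auto
      then show ?thesis using y Suc by auto
    qed
  qed
qed simp

text \<open>Comparing the segments with all a_k lowered by one suffices, since
  the lower part of Pascal's splitting is the shadow of the upper part.\<close>
lemma colex_segment_map_Suc_subset:
  assumes L: "sorted_wrt (>) L" and M: "sorted_wrt (>) M"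
    and L_large: "\<forall>t<length L. Suc j - t \<le> L ! t"
    and card_le: "card (colex_segment (Suc j) L) \<le> card (colex_segment (Suc j) M)"
  shows "colex_segment (Suc j) (map Suc L) \<subseteq> colex_segment (Suc j) (map Suc M)"
proof (rule colex_segment_subset_if_card_le)
  have upper: "colex_segment (Suc j) L \<subseteq> colex_segment (Suc j) M"
    using colex_segment_subset_if_card_le L M card_le by blast
  have lower: "colex_segment j L \<subseteq> colex_segment j M"
  proof
    fix X assume "X \<in> colex_segment j L"
    then obtain y where "y \<notin> X" "insert y X \<in> colex_segment (Suc j) L"
      using insert_mem_colex_segment L L_large by blast
    then show "X \<in> colex_segment j M"
      using Diff_singleton_mem_colex_segment[OF M] upper by fastforce
  qed
  show "card (colex_segment (Suc j) (map Suc L)) \<le> card (colex_segment (Suc j) (map Suc M))"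
    using card_colex_segment_map_Suc L M card_le card_mono[OF finite_colex_segment lower] by simp
qed (use L M in \<open>simp_all add: sorted_wrt_map\<close>)

subsection \<open>Binomial expansions\<close>

definition binexp_rep0 :: "nat \<Rightarrow> nat \<Rightarrow> nat list \<Rightarrow> bool" where
  "binexp_rep0 i m L \<longleftrightarrow> length L \<le> i \<and> sorted_wrt (>) L \<and> (\<forall>k<length L. i - k \<le> L ! k) \<and>
     m = (\<Sum>k<length L. (L ! k) choose (i - k))"

lemma binexp_rep_iff: "binexp_rep i m L \<longleftrightarrow> L \<noteq> [] \<and> binexp_rep0 i m L"
proof -
  have "transp ((>) :: nat \<Rightarrow> nat \<Rightarrow> bool)" by (auto simp: transp_def)
  then have "sorted_wrt (>) L \<longleftrightarrow> (\<forall>k. Suc k < length L \<longrightarrow> L ! k > L ! Suc k)"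
    by (simp add: sorted_wrt_iff_nth_Suc_transp)
  then show ?thesis unfolding binexp_rep_def binexp_rep0_def by (auto simp: Suc_le_eq)
qed

lemma binexp_repD:
  assumes "binexp_rep i m L"
  shows "sorted_wrt (>) L" "length L \<le> i" "\<forall>t<length L. i - t \<le> L ! t"
    "m = (\<Sum>t<length L. (L ! t) choose (i - t))"
  using assms by (auto simp: binexp_rep_iff binexp_rep0_def)

lemma binexp_rep0_Nil: "binexp_rep0 i m [] \<longleftrightarrow> m = 0"
  by (auto simp: binexp_rep0_def)

lemma binexp_rep0_Cons:
  "binexp_rep0 i m (a # L) \<longleftrightarrow> 1 \<le> i \<and> i \<le> a \<and> (\<forall>x\<in>set L. x < a) \<and> (a choose i) \<le> m \<and>
     binexp_rep0 (i - 1) (m - (a choose i)) L"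
proof -
  have "(\<forall>k<length (a # L). i - k \<le> (a # L) ! k) \<longleftrightarrow> i \<le> a \<and> (\<forall>k<length L. (i - 1) - k \<le> L ! k)"
    unfolding length_Cons All_less_Suc2 by simp
  moreover have "(\<Sum>k<length (a # L). (a # L) ! k choose (i - k)) =
      (a choose i) + (\<Sum>k<length L. L ! k choose ((i - 1) - k))"
    by (simp add: sum.lessThan_Suc_shift del: sum.lessThan_Suc)
  ultimately show ?thesis unfolding binexp_rep0_def by auto
qed

lemma binexp_rep0_Cons_less: "binexp_rep0 i m (a # L) \<Longrightarrow> m < Suc a choose i"
proof (induction L arbitrary: i m a)
  case Nil
  then obtain i' where "i = Suc i'" "i \<le> a" "m = a choose i"
    by (cases i) (auto simp: binexp_rep0_Cons binexp_rep0_Nil)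
  then show ?case by simp
next
  case (Cons b L)
  then obtain i' where i: "i = Suc i'" and "b < a" "(a choose i) \<le> m"
    and tail: "binexp_rep0 i' (m - (a choose i)) (b # L)"
    by (cases i) (auto simp: binexp_rep0_Cons)
  have "m - (a choose i) < Suc b choose i'" using Cons.IH[OF tail] .
  also have "\<dots> \<le> a choose i'" using \<open>b < a\<close> binomial_right_mono by simp
  finally show ?case using i \<open>(a choose i) \<le> m\<close> by simp
qed

lemma less_if_choose_le_less_choose:
  assumes "y choose i \<le> m" "m < x choose i"
  shows "y < x"
proof (rule ccontr)
  assume "\<not> y < x"
  then have "x choose i \<le> y choose i" by (simp add: binomial_right_mono)
  with assms show False by simp
qed

lemma binexp_rep0_unique: "binexp_rep0 i m L1 \<Longrightarrow> binexp_rep0 i m L2 \<Longrightarrow> L1 = L2"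
proof (induction L1 arbitrary: i m L2)
  case Nil
  then show ?case by (cases L2) (auto simp: binexp_rep0_Cons binexp_rep0_Nil)
next
  case (Cons a L1)
  then obtain b L where L2: "L2 = b # L"
    by (cases L2) (auto simp: binexp_rep0_Cons binexp_rep0_Nil)
  have lead: "a' choose i \<le> m" "m < Suc a' choose i" if "binexp_rep0 i m (a' # L')" for a' L'
    using that binexp_rep0_Cons_less by (auto simp: binexp_rep0_Cons)
  have "a = b"
    using lead[OF Cons.prems(1)] lead[of b L] Cons.prems(2) L2
    by (metis less_if_choose_le_less_choose less_Suc_eq_le le_antisym)
  then show ?case using Cons.IH[of "i - 1" "m - (a choose i)" L] Cons.prems L2
    by (simp add: binexp_rep0_Cons)
qed

lemma less_add_Suc_choose: "m < (m + Suc n) choose Suc n"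
proof (induction n)
  case (Suc n)
  then show ?case by simp
qed simp

lemma ex_choose_le_less_Suc_choose: "\<exists>a. a choose Suc n \<le> m \<and> m < Suc a choose Suc n"
proof -
  have "\<exists>a. m < a choose Suc n" using less_add_Suc_choose by blast
  then have "\<exists>a. \<not> m < a choose Suc n \<and> m < Suc a choose Suc n"
    by (rule exists_least_lemma[rotated]) simp
  then show ?thesis by (auto simp: not_less)
qed

lemma binexp_rep0_exists: "i = 0 \<longrightarrow> m = 0 \<Longrightarrow> \<exists>L. binexp_rep0 i m L"
proof (induction i arbitrary: m)
  case 0
  then show ?case by (intro exI[of _ "[]"]) (simp add: binexp_rep0_Nil)
next
  case (Suc i)
  show ?case
  proof (cases "m = 0")
    case True
    then show ?thesis by (intro exI[of _ "[]"]) (simp add: binexp_rep0_Nil)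
  next
    case False
    obtain a where a: "(a choose Suc i) \<le> m" "m < Suc a choose Suc i"
      using ex_choose_le_less_Suc_choose by blast
    have "Suc i \<le> a"
    proof (rule ccontr)
      assume "\<not> Suc i \<le> a"
      then have "Suc a choose Suc i \<le> 1" by (cases "a = i") (auto simp: binomial_eq_0)
      then show False using a False by simp
    qed
    define r where "r = m - (a choose Suc i)"
    have "r < a choose i" using a r_def by simp
    then have "i = 0 \<longrightarrow> r = 0" by auto
    then obtain L where L: "binexp_rep0 i r L" using Suc.IH by blast
    have "\<forall>x\<in>set L. x < a"
    proof (cases L)
      case (Cons b L')
      then have "(b choose i) \<le> r" "\<forall>x\<in>set L'. x < b" using L by (auto simp: binexp_rep0_Cons)
      moreover have "b < a"
        using less_if_choose_le_less_choose \<open>(b choose i) \<le> r\<close> \<open>r < a choose i\<close> by blast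
      ultimately show ?thesis using Cons by auto
    qed simp
    then have "binexp_rep0 (Suc i) m (a # L)"
      using L \<open>Suc i \<le> a\<close> a r_def by (simp add: binexp_rep0_Cons)
    then show ?thesis by blast
  qed
qed

lemma binexp_rep_binexp:
  assumes "1 \<le> i" "1 \<le> m"
  shows "binexp_rep i m (binexp i m)"
proof -
  obtain L where L: "binexp_rep0 i m L" using binexp_rep0_exists assms by fastforce
  then have "binexp_rep i m L" using assms by (auto simp: binexp_rep_iff binexp_rep0_Nil)
  then have "\<exists>!L. binexp_rep i m L" using binexp_rep0_unique by (auto simp: binexp_rep_iff)
  then show ?thesis unfolding binexp_def by (rule theI')
qed

lemma card_colex_segment_binexp:
  "1 \<le> i \<Longrightarrow> 1 \<le> m \<Longrightarrow> card (colex_segment i (binexp i m)) = m"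
  using binexp_repD[OF binexp_rep_binexp] card_colex_segment by (simp add: le_SucI)

lemma binexp_rep_decrement:
  assumes "binexp_rep i m L"
  shows "map Suc (map (\<lambda>a. a - 1) L) = L" "sorted_wrt (>) (map (\<lambda>a. a - 1) L)"
    "\<forall>t<length L. i - Suc t \<le> map (\<lambda>a. a - 1) L ! t"
proof -
  note L = binexp_repD[OF assms]
  have positive: "\<forall>x\<in>set L. 1 \<le> x"
    using L(2,3) by (fastforce simp: in_set_conv_nth)
  then show "map Suc (map (\<lambda>a. a - 1) L) = L" by (auto intro!: map_idI)
  show "sorted_wrt (>) (map (\<lambda>a. a - 1) L)"
    unfolding sorted_wrt_map using positive by (intro sorted_wrt_mono_rel[OF _ L(1)]) fastforce
  show "\<forall>t<length L. i - Suc t \<le> map (\<lambda>a. a - 1) L ! t" using L(3) by auto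
qed

lemma card_colex_segment_decrement:
  assumes "binexp_rep i m L" "length L \<le> Suc k"
  shows "card (colex_segment k (map (\<lambda>a. a - 1) L)) = (\<Sum>t<length L. (L ! t - 1) choose (k - t))"
  using card_colex_segment[OF binexp_rep_decrement(2)[OF assms(1)]] assms(2) by simp

subsection \<open>The colex complex of a polynomial\<close>

lemma colex_segment_shadow_subset:
  assumes "1 \<le> i" "1 \<le> m'" "1 \<le> m" and h_le_g: "h_coef (Suc i) m' \<le> g_coef i m"
  shows "colex_segment i (binexp (Suc i) m') \<subseteq> colex_segment i (binexp i m)"
proof -
  obtain j where i: "i = Suc j" using assms by (cases i) auto
  define L M where "L = binexp (Suc i) m'" and "M = binexp i m"
  have L: "binexp_rep (Suc i) m' L" and M: "binexp_rep i m M"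
    using binexp_rep_binexp assms L_def M_def by auto
  define dec :: "nat list \<Rightarrow> nat list" where "dec = map (\<lambda>a. a - 1)"
  have "card (colex_segment i (dec L)) = h_coef (Suc i) m'"
    using card_colex_segment_decrement[OF L] binexp_repD(2)[OF L]
    by (simp add: dec_def h_coef_def Let_def L_def)
  moreover have "card (colex_segment i (dec M)) = g_coef i m"
    using card_colex_segment_decrement[OF M] binexp_repD(2)[OF M]
    by (simp add: dec_def g_coef_def Let_def M_def)
  ultimately have "colex_segment i (map Suc (dec L)) \<subseteq> colex_segment i (map Suc (dec M))"
    unfolding i
  proof (intro colex_segment_map_Suc_subset)
    show "sorted_wrt (>) (dec L)" "sorted_wrt (>) (dec M)"
      using binexp_rep_decrement(2) L M unfolding dec_def by auto
    show "\<forall>t<length (dec L). Suc j - t \<le> dec L ! t"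
      using binexp_rep_decrement(3)[OF L] i unfolding dec_def by simp
  qed (use h_le_g i in simp)
  then show ?thesis using binexp_rep_decrement(1) L M unfolding L_def M_def dec_def by simp
qed

definition colex_layer :: "nat poly \<Rightarrow> nat \<Rightarrow> nat set set" where
  "colex_layer f k = (if k = 0 then {{}} else colex_segment k (binexp k (coeff f k)))"

lemma finite_colex_layer: "finite (colex_layer f k)"
  by (simp add: colex_layer_def finite_colex_segment)

lemma sorted_binexp_coeff:
  assumes "\<forall>k\<in>{1..degree f}. 0 < coeff f k" "1 \<le> k" "k \<le> degree f"
  shows "sorted_wrt (>) (binexp k (coeff f k))"
  using assms by (intro binexp_repD(1)[OF binexp_rep_binexp]) (auto simp: Suc_le_eq)

lemma card_of_mem_colex_layer:
  assumes "\<forall>k\<in>{1..degree f}. 0 < coeff f k" "k \<le> degree f" "X \<in> colex_layer f k"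
  shows "finite X \<and> card X = k"
proof (cases "k = 0")
  case False
  then show ?thesis
    using assms(2,3) card_of_mem_colex_segment[OF sorted_binexp_coeff[OF assms(1), of k]]
    by (simp add: colex_layer_def)
qed (use assms in \<open>simp add: colex_layer_def\<close>)

lemma card_colex_layer:
  assumes "\<forall>k\<in>{1..degree f}. 0 < coeff f k" "coeff f 0 = 1" "k \<le> degree f"
  shows "card (colex_layer f k) = coeff f k"
  using assms card_colex_segment_binexp by (simp add: colex_layer_def Suc_le_eq)

lemma Diff_singleton_mem_colex_layer:
  assumes pos: "\<forall>k\<in>{1..degree f}. 0 < coeff f k"
    and h_le_g: "\<forall>i\<in>{1..<degree f}. h_coef (Suc i) (coeff f (Suc i)) \<le> g_coef i (coeff f i)"
    and le: "Suc k \<le> degree f" and X: "X \<in> colex_layer f (Suc k)" and x: "x \<in> X"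
  shows "X - {x} \<in> colex_layer f k"
proof (cases "k = 0")
  case True
  then obtain y where "X = {y}" using card_of_mem_colex_layer[OF pos le X] card_1_singletonE by auto
  then show ?thesis using x True by (simp add: colex_layer_def)
next
  case False
  have "X - {x} \<in> colex_segment k (binexp (Suc k) (coeff f (Suc k)))"
    using X x Diff_singleton_mem_colex_segment[OF sorted_binexp_coeff[OF pos]] le
    by (simp add: colex_layer_def)
  also have "\<dots> \<subseteq> colex_segment k (binexp k (coeff f k))"
    using False le pos h_le_g by (intro colex_segment_shadow_subset) (auto simp: Suc_le_eq)
  finally show ?thesis using False by (simp add: colex_layer_def)
qed

theorem proposition3p5:
  assumes "\<forall>f. pos_real_rooted f \<longrightarrow>
             (\<forall>i\<in>{1..<degree f}. h_coef (Suc i) (coeff f (Suc i)) \<le> g_coef i (coeff f i))"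
  shows "\<forall>f. pos_real_rooted f \<longrightarrow>
           (\<exists>\<Delta> :: nat set set. simplicial_complex \<Delta> \<and> is_f_polynomial f \<Delta>)"
proof (intro allI impI)
  fix f :: "nat poly" assume f: "pos_real_rooted f"
  then have pos: "\<forall>k\<in>{1..degree f}. 0 < coeff f k" and "coeff f 0 = 1"
    by (simp_all add: pos_real_rooted_def)
  have h_le_g: "\<forall>i\<in>{1..<degree f}. h_coef (Suc i) (coeff f (Suc i)) \<le> g_coef i (coeff f i)"
    using assms f by blast
  have "colex_layer f 0 = {{}}" by (simp add: colex_layer_def)
  note layers = simplicial_complex_of_layers[of "colex_layer f" "degree f", OF this finite_colex_layer
      card_of_mem_colex_layer[OF pos] Diff_singleton_mem_colex_layer[OF pos h_le_g]]
  have "card {F \<in> (\<Union>k\<le>degree f. colex_layer f k). card F = n} = coeff f n" for n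
    using layers(2)[of n] card_colex_layer[OF pos \<open>coeff f 0 = 1\<close>, of n]
    by (simp add: colex_layer_def coeff_eq_0)
  then show "\<exists>\<Delta> :: nat set set. simplicial_complex \<Delta> \<and> is_f_polynomial f \<Delta>"
    using layers(1) unfolding is_f_polynomial_def by blast
qed

end
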